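(* In the setting below, fix $M\in\mathcal M$ and assume (i) $P_n(M)^{-1}=o(n)$; (ii) $\lim_{n\to\infty}\inf_{\theta\in\Theta^M}P_{n,\theta}(M)\,e^n=\infty$; (iii) for a sufficiently small ball $U$ centered at $\theta^M_0$, $\sup_{\theta\in U\cap\Theta^M}P_{n,\theta}(M)^{-1}=o(n)$. Then for every $\delta<1/2$, $$n^\delta\,\big\|\mathbb E_{\theta^M_0}(\bar T_n)-\mathbb E_{\theta^M_0}(\bar T_n\mid M)\big\|\to0 .$$
   Context: Setting: $(y_i)_{i\ge1}$ are i.i.d. from a distribution $f^*$. $\{p_\theta:\theta\in\Theta\}$, $\Theta\subseteq\mathbb R^p$, is a regular exponential family with natural parameter $\theta$, sufficient statistic $T$, and log-likelihood $\ell_\theta(y)=\log p_\theta(y)$; $\bar T_n=n^{-1}\sum_{i=1}^nT(y_i)$. $\mathcal M$ is a countable set of submodels $M=\{p_\theta:\theta\in\Theta^M\}$, $\Theta^M\subseteq\Theta$. For each $n$, $S_n:\mathbb R^p\to\mathcal M$ is a model selection procedure applied to $\bar T_n$; $P_n(M)=P(S_n(\bar T_n)=M)$ when $y_1,\dots,y_n$ are i.i.d. $f^*$, and $P_{n,\theta}(M)$ is the same probability when $y_1,\dots,y_n$ are i.i.d. $p_\theta$. The target is $\theta^M_0=\arg\sup_{\theta\in\Theta^M}\mathbb E_{f^*}[\ell_\theta(y)]$ (assumed to exist). $\mathbb E_{\theta}(\cdot)$ denotes expectation for $y_1,\dots,y_n$ i.i.d. $p_\theta$ and $\mathbb E_{\theta}(\cdot\mid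 M)$ the same conditional on $\{S_n(\bar T_n)=M\}$. *)

theory Defs
  imports "HOL-Probability.Probability" "HOL-Library.Landau_Symbols"
begin

definition nat_param_space :: "'y measure \<Rightarrow> ('y \<Rightarrow> 'p::euclidean_space) \<Rightarrow> 'p set" where
  "nat_param_space mu T = {\<theta>. integrable mu (\<lambda>y. exp (\<theta> \<bullet> T y))}"

definition log_partition :: "'y measure \<Rightarrow> ('y \<Rightarrow> 'p::euclidean_space) \<Rightarrow> 'p \<Rightarrow> real" where
  "log_partition mu T \<theta> = ln (\<integral>y. exp (\<theta> \<bullet> T y) \<partial>mu)"

definition ef_density :: "'y measure \<Rightarrow> ('y \<Rightarrow> 'p::euclidean_space) \<Rightarrow> 'p \<Rightarrow> 'y \<Rightarrow> real" where
  "ef_density mu T \<theta> y = exp (\<theta> \<bullet> T y - log_partition mu T \<theta>)"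

definition ef_loglik :: "'y measure \<Rightarrow> ('y \<Rightarrow> 'p::euclidean_space) \<Rightarrow> 'p \<Rightarrow> 'y \<Rightarrow> real" where
  "ef_loglik mu T \<theta> y = ln (ef_density mu T \<theta> y)"

definition ef_measure :: "'y measure \<Rightarrow> ('y \<Rightarrow> 'p::euclidean_space) \<Rightarrow> 'p \<Rightarrow> 'y measure" where
  "ef_measure mu T \<theta> = density mu (\<lambda>y. ennreal (ef_density mu T \<theta> y))"

definition regular_exp_family :: "'y measure \<Rightarrow> ('y \<Rightarrow> 'p::euclidean_space) \<Rightarrow> bool" where
  "regular_exp_family mu T \<longleftrightarrow>
     T \<in> borel_measurable mu \<and> emeasure mu (space mu) > 0 \<and>
     open (nat_param_space mu T) \<and> nat_param_space mu T \<noteq> {}"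

definition sample_mean :: "('y \<Rightarrow> 'p::euclidean_space) \<Rightarrow> nat \<Rightarrow> (nat \<Rightarrow> 'y) \<Rightarrow> 'p" where
  "sample_mean T n ys = (1 / real n) *\<^sub>R (\<Sum>i<n. T (ys i))"

definition iid_sample :: "nat \<Rightarrow> 'y measure \<Rightarrow> (nat \<Rightarrow> 'y) measure" where
  "iid_sample n P = PiM {..<n} (\<lambda>_. P)"

definition sel_event :: "('y \<Rightarrow> 'p::euclidean_space) \<Rightarrow> (nat \<Rightarrow> 'p \<Rightarrow> 'm) \<Rightarrow> nat \<Rightarrow> 'y measure \<Rightarrow> 'm \<Rightarrow> (nat \<Rightarrow> 'y) set" where
  "sel_event T S n P m = {ys \<in> space (iid_sample n P). S n (sample_mean T n ys) = m}"

definition sel_prob :: "('y \<Rightarrow> 'p::euclidean_space) \<Rightarrow> (nat \<Rightarrow> 'p \<Rightarrow> 'm) \<Rightarrow> nat \<Rightarrow> 'y measure \<Rightarrow> 'm \<Rightarrow> real" where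
  "sel_prob T S n P m = measure (iid_sample n P) (sel_event T S n P m)"

definition cond_exp_event :: "'a measure \<Rightarrow> 'a set \<Rightarrow> ('a \<Rightarrow> 'p::euclidean_space) \<Rightarrow> 'p" where
  "cond_exp_event P A X = (1 / measure P A) *\<^sub>R (\<integral>x. indicator A x *\<^sub>R X x \<partial>P)"

end

theory Submission
  imports Defs "HOL-Real_Asymp.Real_Asymp"
begin

text \<open>Under \<open>\<theta>0\<close> the sufficient statistic has exponential moments in every direction \<open>u\<close>, so the
  centred sample average \<open>X = (T\<^sub>n - E T) \<bullet> u\<close> satisfies \<open>E exp (l X) \<le> exp (K l\<^sup>2 / n)\<close> for \<open>l\<close> up to
  order \<open>n\<close>. The Fenchel inequality \<open>a b \<le> e\<^sup>a + b ln b - b\<close> gives, for every event \<open>A\<close>,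
  \<open>E (X | A) \<le> (E exp (l X) + ln (1 / P A) - 1) / l\<close>. Taking \<open>l \<sim> \<surd>n\<close> and an event of probability at least
  \<open>1 / n\<close> yields \<open>|E (X | A)| = O ((1 + ln n) / \<surd>n)\<close>, which is \<open>o (n\<^sup>-\<^sup>\<delta>)\<close> for \<open>\<delta> < 1/2\<close>.\<close>

subsection \<open>Exponential moment bounds\<close>

lemma mult_le_exp_add_entropy:
  fixes a b :: real assumes "b > 0"
  shows "a * b \<le> exp a + b * ln b - b"
proof -
  have "1 + (a - ln b) \<le> exp (a - ln b)" by (rule exp_ge_add_one_self)
  also have "\<dots> = exp a / b" using assms by (simp add: exp_diff)
  finally have "b * (1 + (a - ln b)) \<le> exp a" using assms by (simp add: field_simps)
  thus ?thesis by (simp add: algebra_simps)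
qed

lemma exp_le_quadratic_Taylor:
  fixes x :: real shows "exp x \<le> 1 + x + exp \<bar>x\<bar> * x\<^sup>2 / 2"
proof -
  obtain t where t: "\<bar>t\<bar> \<le> \<bar>x\<bar>" "exp x = (\<Sum>m<2. x ^ m / fact m) + exp t / fact 2 * x\<^sup>2"
    using Maclaurin_exp_le[of x 2] by blast
  have "exp t * x\<^sup>2 \<le> exp \<bar>x\<bar> * x\<^sup>2" using t(1) by (simp add: mult_right_mono)
  thus ?thesis using t(2) by (simp add: numeral_2_eq_2)
qed

lemma power2_le_exp_abs:
  fixes y c :: real assumes "c > 0"
  shows "y\<^sup>2 \<le> 8 / c\<^sup>2 * exp (c * \<bar>y\<bar> / 2)"
proof -
  have "0 \<le> c * \<bar>y\<bar> / 2" using assms by simp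
  hence "1 + c * \<bar>y\<bar> / 2 + (c * \<bar>y\<bar> / 2)\<^sup>2 / 2 \<le> exp (c * \<bar>y\<bar> / 2)"
    by (rule exp_lower_Taylor_quadratic)
  moreover have "(c * \<bar>y\<bar> / 2)\<^sup>2 = c\<^sup>2 * y\<^sup>2 / 4" by (simp add: power_mult_distrib power_divide)
  ultimately have "c\<^sup>2 * y\<^sup>2 / 8 \<le> exp (c * \<bar>y\<bar> / 2)" using \<open>0 \<le> c * \<bar>y\<bar> / 2\<close> by simp
  thus ?thesis using assms by (simp add: field_simps)
qed

lemma exp_mult_le_quadratic:
  fixes s y c :: real assumes c: "c > 0" and s: "\<bar>s\<bar> \<le> c / 2"
  shows "exp (s * y) \<le> 1 + s * y + 4 * s\<^sup>2 / c\<^sup>2 * exp (c * \<bar>y\<bar>)"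
proof -
  have "\<bar>s\<bar> * \<bar>y\<bar> \<le> c / 2 * \<bar>y\<bar>" using s by (intro mult_right_mono) auto
  hence e: "exp \<bar>s * y\<bar> \<le> exp (c * \<bar>y\<bar> / 2)" by (simp add: abs_mult)
  have "(s * y)\<^sup>2 \<le> s\<^sup>2 * (8 / c\<^sup>2 * exp (c * \<bar>y\<bar> / 2))"
    using mult_left_mono[OF power2_le_exp_abs[OF c, of y], of "s\<^sup>2"]
    by (simp add: power_mult_distrib)
  hence "exp \<bar>s * y\<bar> * (s * y)\<^sup>2 / 2 \<le> exp (c * \<bar>y\<bar> / 2) * (s\<^sup>2 * (8 / c\<^sup>2 * exp (c * \<bar>y\<bar> / 2))) / 2"
    using e by (intro divide_right_mono mult_mono) auto
  also have "\<dots> = 4 * s\<^sup>2 / c\<^sup>2 * exp (c * \<bar>y\<bar>)"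
    by (simp add: field_simps exp_add[symmetric])
  finally show ?thesis using exp_le_quadratic_Taylor[of "s * y"] by linarith
qed

lemma integrable_of_exp_abs:
  fixes Y :: "'a \<Rightarrow> real"
  assumes "Y \<in> borel_measurable P" "c > 0" "integrable P (\<lambda>y. exp (c * \<bar>Y y\<bar>))"
  shows "integrable P Y"
proof (rule Bochner_Integration.integrable_bound[OF integrable_mult_right[OF assms(3), of "1 / c"]])
  have "\<bar>Y x\<bar> \<le> 1 / c * exp (c * \<bar>Y x\<bar>)" for x
    using exp_ge_add_one_self[of "c * \<bar>Y x\<bar>"] assms(2) by (simp add: field_simps del: exp_ge_add_one_self)
  thus "AE x in P. norm (Y x) \<le> norm (1 / c * exp (c * \<bar>Y x\<bar>))" using assms(2) by simp
qed fact

lemma integrable_exp_abs_diff_const: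
  fixes Y :: "'a \<Rightarrow> real"
  assumes "Y \<in> borel_measurable P" "c > 0" "integrable P (\<lambda>y. exp (c * \<bar>Y y\<bar>))"
  shows "integrable P (\<lambda>y. exp (c * \<bar>Y y - a\<bar>))"
proof (rule Bochner_Integration.integrable_bound[OF integrable_mult_right[OF assms(3), of "exp (c * \<bar>a\<bar>)"]])
  have "c * \<bar>Y x - a\<bar> \<le> c * \<bar>a\<bar> + c * \<bar>Y x\<bar>" for x
    using assms(2) by (metis abs_triangle_ineq4 add.commute distrib_left mult_left_mono less_imp_le)
  thus "AE x in P. norm (exp (c * \<bar>Y x - a\<bar>)) \<le> norm (exp (c * \<bar>a\<bar>) * exp (c * \<bar>Y x\<bar>))"
    by (simp add: exp_add[symmetric])
  show "(\<lambda>y. exp (c * \<bar>Y y - a\<bar>)) \<in> borel_measurable P" using assms(1) by measurable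
qed

lemma integrable_exp_mult_of_exp_abs:
  fixes Y :: "'a \<Rightarrow> real"
  assumes "Y \<in> borel_measurable P" "integrable P (\<lambda>y. exp (c * \<bar>Y y\<bar>))" "\<bar>s\<bar> \<le> c"
  shows "integrable P (\<lambda>y. exp (s * Y y))"
proof (rule Bochner_Integration.integrable_bound[OF assms(2)])
  have "s * Y x \<le> c * \<bar>Y x\<bar>" for x
  proof -
    have "s * Y x \<le> \<bar>s\<bar> * \<bar>Y x\<bar>" by (metis abs_ge_self abs_mult)
    also have "\<dots> \<le> c * \<bar>Y x\<bar>" using assms(3) by (intro mult_right_mono) auto
    finally show ?thesis .
  qed
  thus "AE x in P. norm (exp (s * Y x)) \<le> norm (exp (c * \<bar>Y x\<bar>))" by simp
  show "(\<lambda>y. exp (s * Y y)) \<in> borel_measurable P" using assms(1) by measurable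
qed

context prob_space
begin

lemma mgf_le_exp_power2:
  fixes Y :: "'a \<Rightarrow> real"
  assumes Y: "Y \<in> borel_measurable M" and c: "c > 0"
    and int: "integrable M (\<lambda>y. exp (c * \<bar>Y y\<bar>))" and mean: "expectation Y = 0"
    and s: "\<bar>s\<bar> \<le> c / 2"
  shows "expectation (\<lambda>y. exp (s * Y y)) \<le> exp (4 / c\<^sup>2 * expectation (\<lambda>y. exp (c * \<bar>Y y\<bar>)) * s\<^sup>2)"
proof -
  have iY: "integrable M Y" by (rule integrable_of_exp_abs[OF Y c int])
  have ie: "integrable M (\<lambda>y. exp (s * Y y))"
    using integrable_exp_mult_of_exp_abs[OF Y int] s c by simp
  have "expectation (\<lambda>y. exp (s * Y y))
      \<le> expectation (\<lambda>y. 1 + s * Y y + 4 * s\<^sup>2 / c\<^sup>2 * exp (c * \<bar>Y y\<bar>))"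
    using exp_mult_le_quadratic[OF c s] ie iY int
    by (intro integral_mono) (auto intro!: integrable_add integrable_mult_right)
  also have "\<dots> = 1 + 4 / c\<^sup>2 * expectation (\<lambda>y. exp (c * \<bar>Y y\<bar>)) * s\<^sup>2"
    using iY int mean prob_space by simp
  also have "\<dots> \<le> exp (4 / c\<^sup>2 * expectation (\<lambda>y. exp (c * \<bar>Y y\<bar>)) * s\<^sup>2)"
    by (rule exp_ge_add_one_self)
  finally show ?thesis .
qed

lemma conditional_mean_le_mgf:
  fixes X :: "'a \<Rightarrow> real"
  assumes A: "A \<in> events" and p: "prob A > 0" and l: "l > 0"
    and iX: "integrable M X" and iE: "integrable M (\<lambda>x. exp (l * X x))"
  shows "expectation (\<lambda>x. indicator A x * X x) / prob A
      \<le> (expectation (\<lambda>x. exp (l * X x)) + ln (1 / prob A) - 1) / l"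
proof -
  define p where "p = prob A"
  have p0: "p > 0" using p unfolding p_def .
  \<comment> \<open>Young's inequality for the conjugate pair \<open>exp\<close> and \<open>b ln b - b\<close>, with \<open>b = 1 / p\<close>.\<close>
  have pt: "l / p * (indicator A x * X x) \<le> exp (l * X x) + (ln (1 / p) - 1) / p * indicator A x" for x
    using mult_le_exp_add_entropy[of "1 / p" "l * X x"] p0
    by (cases "x \<in> A") (simp_all add: diff_divide_distrib)
  have iA: "integrable M (\<lambda>x. indicator A x :: real)"
    using A by (simp add: emeasure_finite less_top[symmetric])
  have "expectation (\<lambda>x. l / p * (indicator A x * X x))
      \<le> expectation (\<lambda>x. exp (l * X x) + (ln (1 / p) - 1) / p * indicator A x)"
    using pt integrable_mult_indicator[OF A iX]
    by (intro integral_mono integrable_mult_right Bochner_Integration.integrable_add iE iA) simp_all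
  also have "\<dots> = expectation (\<lambda>x. exp (l * X x)) + ln (1 / p) - 1"
    using iE iA A p0 by (simp add: p_def)
  finally have "l * (expectation (\<lambda>x. indicator A x * X x) / p)
      \<le> expectation (\<lambda>x. exp (l * X x)) + ln (1 / p) - 1"
    by simp
  thus ?thesis using l unfolding p_def[symmetric] by (simp add: field_simps)
qed

lemma inner_cond_exp_event_minus_expectation:
  fixes X :: "'a \<Rightarrow> 'p::euclidean_space"
  assumes A: "A \<in> events" and p: "prob A > 0" and iX: "integrable M X"
  shows "(cond_exp_event M A X - expectation X) \<bullet> u
      = expectation (\<lambda>x. indicator A x * (X x \<bullet> u - expectation X \<bullet> u)) / prob A"
proof -
  have iA: "integrable M (\<lambda>x. indicator A x :: real)"
    using A by (simp add: emeasure_finite less_top[symmetric])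
  have iAX: "integrable M (\<lambda>x. indicator A x * (X x \<bullet> u))"
    using integrable_mult_indicator[OF A integrable_inner_left[OF iX, of u]] by simp
  have "(\<integral>x. indicator A x *\<^sub>R X x \<partial>M) \<bullet> u = expectation (\<lambda>x. indicator A x * (X x \<bullet> u))"
    using integrable_mult_indicator[OF A iX] by (subst integral_inner_left[symmetric]) auto
  moreover have "expectation (\<lambda>x. indicator A x * (X x \<bullet> u - expectation X \<bullet> u))
      = expectation (\<lambda>x. indicator A x * (X x \<bullet> u)) - prob A * (expectation X \<bullet> u)"
    using iA iAX A by (simp add: right_diff_distrib)
  ultimately show ?thesis
    using p unfolding cond_exp_event_def by (simp add: inner_diff_left field_simps)
qed

end

lemma integrable_of_exp_abs_inner:
  fixes T :: "'a \<Rightarrow> 'p::euclidean_space"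
  assumes T: "T \<in> borel_measurable P"
    and mom: "\<And>u. \<exists>c>0. integrable P (\<lambda>y. exp (c * \<bar>T y \<bullet> u\<bar>))"
  shows "integrable P T"
proof -
  have "integrable P (\<lambda>y. T y \<bullet> b)" for b
    using mom[of b] integrable_of_exp_abs[of "\<lambda>y. T y \<bullet> b" P] T by auto
  hence "integrable P (\<lambda>y. \<Sum>b\<in>Basis. (T y \<bullet> b) *\<^sub>R b)"
    by (intro Bochner_Integration.integrable_sum integrable_scaleR_left) auto
  thus ?thesis by (simp add: euclidean_representation)
qed

subsection \<open>Exponential families\<close>

lemma ef_partition_pos:
  assumes reg: "regular_exp_family mu T" and \<theta>: "\<theta> \<in> nat_param_space mu T"
  shows "(\<integral>y. exp (\<theta> \<bullet> T y) \<partial>mu) > 0"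
proof -
  have [measurable]: "T \<in> borel_measurable mu" and pos: "emeasure mu (space mu) > 0"
    using reg unfolding regular_exp_family_def by auto
  have int: "integrable mu (\<lambda>y. exp (\<theta> \<bullet> T y))" using \<theta> unfolding nat_param_space_def by simp
  have "(\<integral>y. exp (\<theta> \<bullet> T y) \<partial>mu) \<noteq> 0"
  proof
    assume "(\<integral>y. exp (\<theta> \<bullet> T y) \<partial>mu) = 0"
    hence "AE y in mu. False" using integral_nonneg_eq_0_iff_AE[OF int] by auto
    hence "ae_filter mu = bot" by (simp add: trivial_limit_def)
    hence "emeasure mu (space mu) = 0" by (simp add: ae_filter_eq_bot_iff)
    thus False using pos by simp
  qed
  moreover have "(\<integral>y. exp (\<theta> \<bullet> T y) \<partial>mu) \<ge> 0" by (rule Bochner_Integration.integral_nonneg) auto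
  ultimately show ?thesis by linarith
qed

lemma ef_density_eq:
  assumes "regular_exp_family mu T" "\<theta> \<in> nat_param_space mu T"
  shows "ef_density mu T \<theta> y = exp (\<theta> \<bullet> T y) / (\<integral>y. exp (\<theta> \<bullet> T y) \<partial>mu)"
  using ef_partition_pos[OF assms] by (simp add: ef_density_def log_partition_def exp_diff)

lemma measurable_ef_density[measurable]:
  assumes "regular_exp_family mu T"
  shows "ef_density mu T \<theta> \<in> borel_measurable mu"
proof -
  have [measurable]: "T \<in> borel_measurable mu" using assms unfolding regular_exp_family_def by auto
  show ?thesis unfolding ef_density_def by measurable
qed

lemma sets_ef_measure[simp]: "sets (ef_measure mu T \<theta>) = sets mu"
  by (simp add: ef_measure_def)

lemma prob_space_ef_measure:
  assumes reg: "regular_exp_family mu T" and \<theta>: "\<theta> \<in> nat_param_space mu T"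
  shows "prob_space (ef_measure mu T \<theta>)"
proof
  have [measurable]: "T \<in> borel_measurable mu" using reg unfolding regular_exp_family_def by auto
  define Z where "Z = (\<integral>y. exp (\<theta> \<bullet> T y) \<partial>mu)"
  have Z: "Z > 0" using ef_partition_pos[OF reg \<theta>] unfolding Z_def .
  have int: "integrable mu (\<lambda>y. exp (\<theta> \<bullet> T y))" using \<theta> unfolding nat_param_space_def by simp
  have "emeasure (ef_measure mu T \<theta>) (space (ef_measure mu T \<theta>))
      = (\<integral>\<^sup>+ y. ennreal (exp (\<theta> \<bullet> T y) / Z) \<partial>mu)"
    unfolding ef_measure_def using measurable_ef_density[OF reg]
    by (simp add: emeasure_density ef_density_eq[OF reg \<theta>] Z_def)
  also have "\<dots> = ennreal (\<integral>y. exp (\<theta> \<bullet> T y) / Z \<partial>mu)"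
    using int Z by (intro nn_integral_eq_integral) auto
  also have "(\<integral>y. exp (\<theta> \<bullet> T y) / Z \<partial>mu) = 1" using Z unfolding Z_def by simp
  finally show "emeasure (ef_measure mu T \<theta>) (space (ef_measure mu T \<theta>)) = 1" by simp
qed

lemma integrable_ef_measure_exp_inner:
  assumes reg: "regular_exp_family mu T" and \<theta>: "\<theta> \<in> nat_param_space mu T"
    and \<theta>v: "\<theta> + v \<in> nat_param_space mu T"
  shows "integrable (ef_measure mu T \<theta>) (\<lambda>y. exp (T y \<bullet> v))"
proof -
  have [measurable]: "T \<in> borel_measurable mu" using reg unfolding regular_exp_family_def by auto
  define Z where "Z = (\<integral>y. exp (\<theta> \<bullet> T y) \<partial>mu)"
  have int: "integrable mu (\<lambda>y. exp ((\<theta> + v) \<bullet> T y))"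
    using \<theta>v unfolding nat_param_space_def by simp
  have eq: "ef_density mu T \<theta> y * exp (T y \<bullet> v) = 1 / Z * exp ((\<theta> + v) \<bullet> T y)" for y
    by (simp add: ef_density_eq[OF reg \<theta>] Z_def inner_add_left inner_commute[of "T y" v] exp_add)
  have "integrable mu (\<lambda>y. ef_density mu T \<theta> y * exp (T y \<bullet> v))"
    unfolding eq using int by simp
  moreover have "AE y in mu. 0 \<le> ef_density mu T \<theta> y" by (simp add: ef_density_def)
  ultimately show ?thesis unfolding ef_measure_def
    using measurable_ef_density[OF reg] by (subst integrable_density) auto
qed

text \<open>Regularity makes the natural parameter space open, so \<open>\<theta> \<plusminus> c u\<close> stays inside it for small \<open>c\<close>.\<close>

lemma ef_exponential_moment:
  assumes reg: "regular_exp_family mu T" and \<theta>: "\<theta> \<in> nat_param_space mu T"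
  shows "\<exists>c>0. integrable (ef_measure mu T \<theta>) (\<lambda>y. exp (c * \<bar>T y \<bullet> u\<bar>))"
proof -
  have "T \<in> borel_measurable mu" and "open (nat_param_space mu T)"
    using reg unfolding regular_exp_family_def by auto
  hence [measurable]: "T \<in> borel_measurable (ef_measure mu T \<theta>)"
    by (simp add: measurable_cong_sets[OF sets_ef_measure refl])
  obtain e where e: "e > 0" "ball \<theta> e \<subseteq> nat_param_space mu T"
    using \<theta> \<open>open (nat_param_space mu T)\<close> open_contains_ball by blast
  define c where "c = e / (2 * (norm u + 1))"
  have "norm u + 1 > 0" by (simp add: add_nonneg_pos)
  hence c: "c > 0" using e unfolding c_def by simp
  have "c * norm u < c * (2 * (norm u + 1))" using c by (simp add: add_nonneg_pos)
  also have "\<dots> = e" using \<open>norm u + 1 > 0\<close> unfolding c_def by simp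
  finally have small: "c * norm u < e" .
  have int: "integrable (ef_measure mu T \<theta>) (\<lambda>y. exp (T y \<bullet> (t *\<^sub>R u)))" if "\<bar>t\<bar> = c" for t
  proof (rule integrable_ef_measure_exp_inner[OF reg \<theta>])
    have "dist \<theta> (\<theta> + t *\<^sub>R u) < e" using small that by (simp add: dist_norm)
    thus "\<theta> + t *\<^sub>R u \<in> nat_param_space mu T" using e(2) by auto
  qed
  have "integrable (ef_measure mu T \<theta>) (\<lambda>y. exp (c * \<bar>T y \<bullet> u\<bar>))"
  proof (rule Bochner_Integration.integrable_bound[OF Bochner_Integration.integrable_add[OF int int]])
    show "\<bar>c\<bar> = c" "\<bar>-c\<bar> = c" using c by simp_all
    have "exp (c * \<bar>x\<bar>) \<le> exp (c * x) + exp (- c * x)" for x :: real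
      by (cases "x \<ge> 0") (simp_all add: add_increasing add_increasing2)
    thus "AE y in ef_measure mu T \<theta>. norm (exp (c * \<bar>T y \<bullet> u\<bar>))
        \<le> norm (exp (T y \<bullet> (c *\<^sub>R u)) + exp (T y \<bullet> (- c *\<^sub>R u)))"
      by (simp add: add_pos_pos)
  qed measurable
  thus ?thesis using c by blast
qed

subsection \<open>Averages of i.i.d. samples\<close>

lemma prob_space_iid_sample: "prob_space P \<Longrightarrow> prob_space (iid_sample n P)"
  unfolding iid_sample_def by (rule prob_space_PiM)

lemma
  fixes f :: "'a \<Rightarrow> 'b::{banach, second_countable_topology}"
  assumes P: "prob_space P" and i: "i < n" and f: "integrable P f"
  shows integrable_iid_component: "integrable (iid_sample n P) (\<lambda>\<omega>. f (\<omega> i))"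
    and integral_iid_component: "(\<integral>\<omega>. f (\<omega> i) \<partial>iid_sample n P) = integral\<^sup>L P f"
proof -
  have d: "distr (iid_sample n P) P (\<lambda>\<omega>. \<omega> i) = P"
    using distr_PiM_component[of "{..<n}" "\<lambda>_. P" i] P i by (simp add: iid_sample_def)
  have m: "(\<lambda>\<omega>. \<omega> i) \<in> measurable (iid_sample n P) P"
    using measurable_component_singleton[of i "{..<n}" "\<lambda>_. P"] i by (simp add: iid_sample_def)
  have fm: "f \<in> borel_measurable P" using f by (rule borel_measurable_integrable)
  show "integrable (iid_sample n P) (\<lambda>\<omega>. f (\<omega> i))"
    using integrable_distr_eq[OF m fm] f d by simp
  show "(\<integral>\<omega>. f (\<omega> i) \<partial>iid_sample n P) = integral\<^sup>L P f"
    using integral_distr[OF m fm] d by simp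
qed

lemma integrable_sample_mean:
  fixes T :: "'a \<Rightarrow> 'p::euclidean_space"
  assumes "prob_space P" "integrable P T"
  shows "integrable (iid_sample n P) (sample_mean T n)"
  unfolding sample_mean_def[abs_def] using integrable_iid_component[OF assms(1) _ assms(2)]
  by (intro integrable_scaleR_right Bochner_Integration.integrable_sum) auto

lemma integral_sample_mean:
  fixes T :: "'a \<Rightarrow> 'p::euclidean_space"
  assumes P: "prob_space P" and T: "integrable P T" and n: "n > 0"
  shows "(\<integral>\<omega>. sample_mean T n \<omega> \<partial>iid_sample n P) = integral\<^sup>L P T"
proof -
  have "(\<integral>\<omega>. (\<Sum>i<n. T (\<omega> i)) \<partial>iid_sample n P) = (\<Sum>i<n. integral\<^sup>L P T)"
    using integrable_iid_component[OF P _ T] integral_iid_component[OF P _ T]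
    by (subst Bochner_Integration.integral_sum) auto
  thus ?thesis using n unfolding sample_mean_def by (simp add: sum_constant_scaleR)
qed

lemma iid_average_mgf_le:
  fixes Y :: "'a \<Rightarrow> real"
  assumes P: "prob_space P" and n: "n > 0"
    and int: "integrable P (\<lambda>y. exp (l / real n * Y y))"
    and le: "(\<integral>y. exp (l / real n * Y y) \<partial>P) \<le> exp (K * (l / real n)\<^sup>2)"
  shows "integrable (iid_sample n P) (\<lambda>\<omega>. exp (l * (1 / real n * (\<Sum>i<n. Y (\<omega> i)))))"
    and "(\<integral>\<omega>. exp (l * (1 / real n * (\<Sum>i<n. Y (\<omega> i)))) \<partial>iid_sample n P) \<le> exp (K * l\<^sup>2 / real n)"
proof -
  interpret product_sigma_finite "\<lambda>_::nat. P"
    using P by (simp add: product_sigma_finite_def prob_space_imp_sigma_finite)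
  have eq: "exp (l * (1 / real n * (\<Sum>i<n. Y (\<omega> i)))) = (\<Prod>i<n. exp (l / real n * Y (\<omega> i)))" for \<omega>
    by (simp add: exp_sum[symmetric] sum_distrib_left)
  show "integrable (iid_sample n P) (\<lambda>\<omega>. exp (l * (1 / real n * (\<Sum>i<n. Y (\<omega> i)))))"
    unfolding eq iid_sample_def using product_integrable_prod[of "{..<n}" "\<lambda>_ y. exp (l / real n * Y y)"] int by simp
  have "(\<integral>\<omega>. exp (l * (1 / real n * (\<Sum>i<n. Y (\<omega> i)))) \<partial>iid_sample n P)
      = (\<Prod>i<n. \<integral>y. exp (l / real n * Y y) \<partial>P)"
    unfolding eq iid_sample_def using product_integral_prod[of "{..<n}" "\<lambda>_ y. exp (l / real n * Y y)"] int by simp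
  also have "\<dots> \<le> (\<Prod>i<n. exp (K * (l / real n)\<^sup>2))"
    using le by (intro prod_mono) auto
  also have "\<dots> = exp (K * (l / real n)\<^sup>2) ^ n" by simp
  also have "\<dots> = exp (K * l\<^sup>2 / real n)"
    using n by (simp add: exp_of_nat_mult[symmetric] power2_eq_square field_simps)
  finally show "(\<integral>\<omega>. exp (l * (1 / real n * (\<Sum>i<n. Y (\<omega> i)))) \<partial>iid_sample n P) \<le> exp (K * l\<^sup>2 / real n)" .
qed

text \<open>The Fenchel bound of \<open>conditional_mean_le_mgf\<close> at the scale \<open>l = \<surd>n / (\<surd>K + 1)\<close>, where the
  moment generating function of the average stays bounded; \<open>ln (1 / P(A)) \<le> ln n\<close> then gives the rate.\<close>

lemma iid_average_conditional_mean_le: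
  fixes Y :: "'a \<Rightarrow> real"
  assumes P: "prob_space P" and iY: "integrable P Y" and K: "K \<ge> 0" and d: "d > 0"
    and mgf: "\<And>s. \<bar>s\<bar> \<le> d \<Longrightarrow>
      integrable P (\<lambda>y. exp (s * Y y)) \<and> (\<integral>y. exp (s * Y y) \<partial>P) \<le> exp (K * s\<^sup>2)"
    and n: "n > 0" "1 / d\<^sup>2 \<le> real n"
    and A: "measure (iid_sample n P) A > 0" "1 / measure (iid_sample n P) A \<le> real n"
  shows "(\<integral>\<omega>. indicator A \<omega> * (1 / real n * (\<Sum>i<n. Y (\<omega> i))) \<partial>iid_sample n P)
      / measure (iid_sample n P) A \<le> 2 * (sqrt K + 1) * ((1 + ln (real n)) / sqrt (real n))"
proof -
  interpret Q: prob_space "iid_sample n P" by (rule prob_space_iid_sample[OF P])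
  define X where "X \<omega> = 1 / real n * (\<Sum>i<n. Y (\<omega> i))" for \<omega>
  define L where "L = sqrt K + 1"
  define l where "l = sqrt (real n) / L"
  have L: "L \<ge> 1" "K \<le> L\<^sup>2" using K unfolding L_def by (simp_all add: power2_sum)
  have l: "l > 0" using n L unfolding l_def by simp
  have "1 / d \<le> sqrt (real n)"
    using real_sqrt_le_mono[OF n(2)] d by (simp add: real_sqrt_divide)
  hence "1 / sqrt (real n) \<le> d" using d n by (simp add: field_simps)
  moreover have "\<bar>l / real n\<bar> = 1 / (L * sqrt (real n))"
    using n L unfolding l_def by (simp add: field_simps)
  moreover have "1 / (L * sqrt (real n)) \<le> 1 / sqrt (real n)"
    using n L by (intro divide_left_mono) (auto simp: mult_le_cancel_right1)
  ultimately have "\<bar>l / real n\<bar> \<le> d" by linarith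
  hence iE: "integrable (iid_sample n P) (\<lambda>\<omega>. exp (l * X \<omega>))"
    and E: "(\<integral>\<omega>. exp (l * X \<omega>) \<partial>iid_sample n P) \<le> exp (K * l\<^sup>2 / real n)"
    using iid_average_mgf_le[OF P n(1)] mgf unfolding X_def by blast+
  have "K * l\<^sup>2 / real n \<le> 1" using n L unfolding l_def by (simp add: power_divide)
  hence E3: "(\<integral>\<omega>. exp (l * X \<omega>) \<partial>iid_sample n P) \<le> 3"
    using E exp_le by (smt (verit) exp_mono)
  have iX: "integrable (iid_sample n P) X"
    unfolding X_def using integrable_iid_component[OF P _ iY]
    by (intro integrable_mult_right Bochner_Integration.integrable_sum) auto
  have "A \<in> sets (iid_sample n P)" using A(1) measure_notin_sets by fastforce
  note bound = Q.conditional_mean_le_mgf[OF this A(1) l iX iE]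
  have "ln (1 / measure (iid_sample n P) A) \<le> ln (real n)" using A by (intro ln_mono) auto
  moreover have "ln (real n) \<ge> 0" using n by simp
  ultimately have "((\<integral>\<omega>. exp (l * X \<omega>) \<partial>iid_sample n P) + ln (1 / measure (iid_sample n P) A) - 1) / l
      \<le> 2 * (1 + ln (real n)) / l"
    using E3 l by (intro divide_right_mono) auto
  also have "\<dots> = 2 * L * ((1 + ln (real n)) / sqrt (real n))" unfolding l_def by simp
  finally show ?thesis using bound unfolding X_def L_def by linarith
qed

lemma iid_conditional_mean_gap_inner_le:
  fixes T :: "'a \<Rightarrow> 'p::euclidean_space"
  assumes P: "prob_space P" and T: "T \<in> borel_measurable P" and iT: "integrable P T"
    and c: "c > 0" and mom: "integrable P (\<lambda>y. exp (c * \<bar>T y \<bullet> u\<bar>))"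
  shows "\<exists>C. eventually (\<lambda>n. \<forall>A.
      measure (iid_sample n P) A > 0 \<and> 1 / measure (iid_sample n P) A \<le> real n \<longrightarrow>
      (cond_exp_event (iid_sample n P) A (sample_mean T n)
        - (\<integral>\<omega>. sample_mean T n \<omega> \<partial>iid_sample n P)) \<bullet> u
      \<le> C * ((1 + ln (real n)) / sqrt (real n))) sequentially"
proof -
  interpret prob_space P by fact
  define Y where "Y y = T y \<bullet> u - expectation T \<bullet> u" for y
  have Tu: "(\<lambda>y. T y \<bullet> u) \<in> borel_measurable P" using T by measurable
  hence Y: "Y \<in> borel_measurable P" unfolding Y_def by measurable
  have iY: "integrable P Y" and EY: "expectation Y = 0"
    unfolding Y_def using iT prob_space by auto
  have momY: "integrable P (\<lambda>y. exp (c * \<bar>Y y\<bar>))"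
    unfolding Y_def by (rule integrable_exp_abs_diff_const[OF Tu c mom])
  define K where "K = 4 / c\<^sup>2 * expectation (\<lambda>y. exp (c * \<bar>Y y\<bar>))"
  have K: "K \<ge> 0" unfolding K_def by (simp add: integral_nonneg)
  have mgf: "integrable P (\<lambda>y. exp (s * Y y)) \<and> expectation (\<lambda>y. exp (s * Y y)) \<le> exp (K * s\<^sup>2)"
    if "\<bar>s\<bar> \<le> c / 2" for s
    using integrable_exp_mult_of_exp_abs[OF Y momY, of s] mgf_le_exp_power2[OF Y c momY EY that] that c
    unfolding K_def by simp
  have "eventually (\<lambda>n. 1 / (c / 2)\<^sup>2 \<le> real n) sequentially"
    using filterlim_real_sequentially by (simp add: filterlim_at_top)
  hence ev: "eventually (\<lambda>n. n > 0 \<and> 1 / (c / 2)\<^sup>2 \<le> real n) sequentially"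
    by (intro eventually_conj eventually_gt_at_top)
  show ?thesis
  proof (intro exI[of _ "2 * (sqrt K + 1)"] eventually_mono[OF ev] allI impI)
    fix n A assume n: "n > 0 \<and> 1 / (c / 2)\<^sup>2 \<le> real n"
      and A: "measure (iid_sample n P) A > 0 \<and> 1 / measure (iid_sample n P) A \<le> real n"
    interpret Q: prob_space "iid_sample n P" by (rule prob_space_iid_sample[OF P])
    have "A \<in> Q.events" using A measure_notin_sets by fastforce
    have avg: "sample_mean T n \<omega> \<bullet> u - expectation T \<bullet> u = 1 / real n * (\<Sum>i<n. Y (\<omega> i))" for \<omega>
      using n unfolding sample_mean_def Y_def by (simp add: inner_sum_left sum_subtractf field_simps)
    have "(cond_exp_event (iid_sample n P) A (sample_mean T n) - Q.expectation (sample_mean T n)) \<bullet> u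
        = Q.expectation (\<lambda>\<omega>. indicator A \<omega> * (sample_mean T n \<omega> \<bullet> u - expectation T \<bullet> u))
          / measure (iid_sample n P) A"
      using Q.inner_cond_exp_event_minus_expectation[OF \<open>A \<in> Q.events\<close> _ integrable_sample_mean[OF P iT]] A
      unfolding integral_sample_mean[OF P iT conjunct1[OF n]] by blast
    also have "\<dots> \<le> 2 * (sqrt K + 1) * ((1 + ln (real n)) / sqrt (real n))"
      unfolding avg
      by (rule iid_average_conditional_mean_le[where d = "c / 2", OF P iY K _ mgf]) (use n A c in auto)
    finally show "(cond_exp_event (iid_sample n P) A (sample_mean T n)
        - Q.expectation (sample_mean T n)) \<bullet> u \<le> 2 * (sqrt K + 1) * ((1 + ln (real n)) / sqrt (real n))" .
  qed
qed

lemma iid_conditional_mean_gap_norm_le: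
  fixes T :: "'a \<Rightarrow> 'p::euclidean_space"
  assumes P: "prob_space P" and T: "T \<in> borel_measurable P"
    and mom: "\<And>u. \<exists>c>0. integrable P (\<lambda>y. exp (c * \<bar>T y \<bullet> u\<bar>))"
  shows "\<exists>C. eventually (\<lambda>n. \<forall>A.
      measure (iid_sample n P) A > 0 \<and> 1 / measure (iid_sample n P) A \<le> real n \<longrightarrow>
      norm ((\<integral>\<omega>. sample_mean T n \<omega> \<partial>iid_sample n P)
        - cond_exp_event (iid_sample n P) A (sample_mean T n))
      \<le> C * ((1 + ln (real n)) / sqrt (real n))) sequentially"
proof -
  define h where "h n = (1 + ln (real n)) / sqrt (real n)" for n :: nat
  define gap where "gap n A = (\<integral>\<omega>. sample_mean T n \<omega> \<partial>iid_sample n P)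
    - cond_exp_event (iid_sample n P) A (sample_mean T n)" for n A
  define good where "good n A \<longleftrightarrow>
    measure (iid_sample n P) A > 0 \<and> 1 / measure (iid_sample n P) A \<le> real n" for n A
  have iT: "integrable P T" by (rule integrable_of_exp_abs_inner[OF T mom])
  have inner: "\<exists>C. eventually (\<lambda>n. \<forall>A. good n A \<longrightarrow> - (gap n A \<bullet> u) \<le> C * h n) sequentially" for u
  proof -
    obtain c where "c > 0" "integrable P (\<lambda>y. exp (c * \<bar>T y \<bullet> u\<bar>))" using mom by blast
    from iid_conditional_mean_gap_inner_le[OF P T iT this] show ?thesis
      unfolding gap_def good_def h_def by (simp add: inner_diff_left)
  qed
  have h: "eventually (\<lambda>n. h n \<ge> 0) sequentially"
    using eventually_ge_at_top[of 1] by (rule eventually_mono) (simp add: h_def)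
  have coord: "\<exists>C. eventually (\<lambda>n. \<forall>A. good n A \<longrightarrow> \<bar>gap n A \<bullet> b\<bar> \<le> C * h n) sequentially" for b
  proof -
    obtain C1 where "eventually (\<lambda>n. \<forall>A. good n A \<longrightarrow> - (gap n A \<bullet> b) \<le> C1 * h n) sequentially"
      using inner by blast
    moreover obtain C2 where "eventually (\<lambda>n. \<forall>A. good n A \<longrightarrow> - (gap n A \<bullet> -b) \<le> C2 * h n) sequentially"
      using inner by blast
    ultimately have "eventually (\<lambda>n. \<forall>A. good n A \<longrightarrow> \<bar>gap n A \<bullet> b\<bar> \<le> max C1 C2 * h n) sequentially"
      using h
    proof eventually_elim
      case (elim n)
      have "C1 * h n \<le> max C1 C2 * h n" "C2 * h n \<le> max C1 C2 * h n"
        using elim(3) by (simp_all add: mult_right_mono)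
      moreover have "- (gap n A \<bullet> b) \<le> C1 * h n" "gap n A \<bullet> b \<le> C2 * h n" if "good n A" for A
        using elim(1,2) that by (simp_all only: inner_minus_right minus_minus)
      ultimately show ?case by (simp only: abs_le_iff) fastforce
    qed
    thus ?thesis by blast
  qed
  define C where "C b = (SOME C. eventually (\<lambda>n. \<forall>A. good n A \<longrightarrow> \<bar>gap n A \<bullet> b\<bar> \<le> C * h n) sequentially)"
    for b
  have "eventually (\<lambda>n. \<forall>A. good n A \<longrightarrow> \<bar>gap n A \<bullet> b\<bar> \<le> C b * h n) sequentially" for b
    unfolding C_def by (rule someI_ex[OF coord])
  hence "eventually (\<lambda>n. \<forall>b\<in>Basis. \<forall>A. good n A \<longrightarrow> \<bar>gap n A \<bullet> b\<bar> \<le> C b * h n) sequentially"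
    by (intro eventually_ball_finite finite_Basis ballI)
  hence "eventually (\<lambda>n. \<forall>A. good n A \<longrightarrow> norm (gap n A) \<le> (\<Sum>b\<in>Basis. C b) * h n) sequentially"
  proof eventually_elim
    case (elim n)
    show ?case
    proof (intro allI impI)
      fix A assume "good n A"
      have "norm (gap n A) \<le> (\<Sum>b\<in>Basis. \<bar>gap n A \<bullet> b\<bar>)" by (rule norm_le_l1)
      also have "\<dots> \<le> (\<Sum>b\<in>Basis. C b * h n)" using elim \<open>good n A\<close> by (intro sum_mono) blast
      finally show "norm (gap n A) \<le> (\<Sum>b\<in>Basis. C b) * h n" by (simp add: sum_distrib_right)
    qed
  qed
  thus ?thesis unfolding gap_def good_def h_def by blast
qed

lemma powr_mult_tendsto_zero_of_log_rate:
  fixes v :: "nat \<Rightarrow> 'a::real_normed_vector" and \<delta> :: real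
  assumes \<delta>: "\<delta> < 1 / 2"
    and v: "eventually (\<lambda>n. norm (v n) \<le> C * ((1 + ln (real n)) / sqrt (real n))) sequentially"
  shows "(\<lambda>n. real n powr \<delta> * norm (v n)) \<longlonglongrightarrow> 0"
proof (rule tendsto_sandwich)
  show "eventually (\<lambda>n. 0 \<le> real n powr \<delta> * norm (v n)) sequentially"
    by (intro always_eventually allI) simp
  from v show "eventually (\<lambda>n. real n powr \<delta> * norm (v n)
      \<le> C * (real n powr \<delta> * ((1 + ln (real n)) / sqrt (real n)))) sequentially"
  proof eventually_elim
    case (elim n)
    hence "real n powr \<delta> * norm (v n) \<le> real n powr \<delta> * (C * ((1 + ln (real n)) / sqrt (real n)))"
      by (rule mult_left_mono) simp
    thus ?case by (simp only: mult.left_commute)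
  qed
  have "(\<lambda>n. real n powr \<delta> * ((1 + ln (real n)) / sqrt (real n))) \<longlonglongrightarrow> 0"
    using \<delta> by real_asymp
  thus "(\<lambda>n. C * (real n powr \<delta> * ((1 + ln (real n)) / sqrt (real n)))) \<longlonglongrightarrow> 0"
    by (rule tendsto_mult_right_zero)
qed auto

theorem lemma6:
  fixes mu :: "'y measure" and T :: "'y \<Rightarrow> 'p::euclidean_space"
    and Fstar :: "'y measure"
    and Theta :: "'m::countable \<Rightarrow> 'p set"
    and S :: "nat \<Rightarrow> 'p \<Rightarrow> 'm"
    and M :: "'m" and \<theta>0 :: "'p"
  assumes reg: "regular_exp_family mu T"
    and fstar: "prob_space Fstar" "sets Fstar = sets mu"
    and sub: "\<And>m. Theta m \<subseteq> nat_param_space mu T"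
    and S_meas: "\<And>n. S n \<in> borel \<rightarrow>\<^sub>M count_space UNIV"
    and target: "\<theta>0 \<in> Theta M"
      "\<And>\<theta>. \<theta> \<in> Theta M \<Longrightarrow> integrable Fstar (ef_loglik mu T \<theta>)"
      "\<And>\<theta>. \<theta> \<in> Theta M \<Longrightarrow>
          (\<integral>y. ef_loglik mu T \<theta> y \<partial>Fstar) \<le> (\<integral>y. ef_loglik mu T \<theta>0 y \<partial>Fstar)"
    and cond_i: "eventually (\<lambda>n. sel_prob T S n Fstar M > 0) sequentially"
      "(\<lambda>n. 1 / sel_prob T S n Fstar M) \<in> o(\<lambda>n. real n)"
    and cond_ii: "filterlim (\<lambda>n. (INF \<theta>\<in>Theta M. sel_prob T S n (ef_measure mu T \<theta>) M)
                              * exp (real n)) at_top sequentially"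
    and cond_iii: "\<exists>r>0. \<exists>g. g \<in> o(\<lambda>n. real n) \<and>
        eventually (\<lambda>n. \<forall>\<theta>\<in>ball \<theta>0 r \<inter> Theta M.
            sel_prob T S n (ef_measure mu T \<theta>) M > 0 \<and>
            1 / sel_prob T S n (ef_measure mu T \<theta>) M \<le> g n) sequentially"
  shows "\<forall>\<delta>::real. \<delta> < 1/2 \<longrightarrow>
    ((\<lambda>n. real n powr \<delta> *
        norm ((\<integral>ys. sample_mean T n ys \<partial>iid_sample n (ef_measure mu T \<theta>0))
              - cond_exp_event (iid_sample n (ef_measure mu T \<theta>0))
                  (sel_event T S n (ef_measure mu T \<theta>0) M) (sample_mean T n)))
     \<longlonglongrightarrow> 0)"
proof (intro allI impI)
  fix \<delta> :: real assume \<delta>: "\<delta> < 1 / 2"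
  define P0 where "P0 = ef_measure mu T \<theta>0"
  have \<theta>0: "\<theta>0 \<in> nat_param_space mu T" using sub target(1) by blast
  have "T \<in> borel_measurable mu" using reg unfolding regular_exp_family_def by blast
  hence "T \<in> borel_measurable P0"
    unfolding P0_def by (simp add: measurable_cong_sets[OF sets_ef_measure refl])
  then obtain C where C: "eventually (\<lambda>n. \<forall>A.
      measure (iid_sample n P0) A > 0 \<and> 1 / measure (iid_sample n P0) A \<le> real n \<longrightarrow>
      norm ((\<integral>\<omega>. sample_mean T n \<omega> \<partial>iid_sample n P0) - cond_exp_event (iid_sample n P0) A (sample_mean T n))
      \<le> C * ((1 + ln (real n)) / sqrt (real n))) sequentially"
    using iid_conditional_mean_gap_norm_le[OF prob_space_ef_measure[OF reg \<theta>0]]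
      ef_exponential_moment[OF reg \<theta>0] unfolding P0_def by blast
  obtain r g where r: "r > 0" and g: "g \<in> o(\<lambda>n. real n)"
    and sel: "eventually (\<lambda>n. \<forall>\<theta>\<in>ball \<theta>0 r \<inter> Theta M.
      sel_prob T S n (ef_measure mu T \<theta>) M > 0 \<and> 1 / sel_prob T S n (ef_measure mu T \<theta>) M \<le> g n) sequentially"
    using cond_iii by blast
  have "eventually (\<lambda>n. g n \<le> real n) sequentially"
    using landau_o.smallD[OF g, of 1] by (rule eventually_mono) auto
  with sel C have "eventually (\<lambda>n. norm ((\<integral>\<omega>. sample_mean T n \<omega> \<partial>iid_sample n P0)
      - cond_exp_event (iid_sample n P0) (sel_event T S n P0 M) (sample_mean T n))
      \<le> C * ((1 + ln (real n)) / sqrt (real n))) sequentially"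
    by eventually_elim (use r target(1) in \<open>force simp: P0_def sel_prob_def\<close>)
  thus "(\<lambda>n. real n powr \<delta> * norm ((\<integral>ys. sample_mean T n ys \<partial>iid_sample n (ef_measure mu T \<theta>0))
      - cond_exp_event (iid_sample n (ef_measure mu T \<theta>0))
          (sel_event T S n (ef_measure mu T \<theta>0) M) (sample_mean T n))) \<longlonglongrightarrow> 0"
    unfolding P0_def by (rule powr_mult_tendsto_zero_of_log_rate[OF \<delta>])
qed

end
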